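(* Under either the overlap preference model or the cost preference model, for every $k\in\mathbb{N}$, the pair $\langle R,F\rangle$, where $R$ is the $k$-equal-representation shortlisting rule and $F$ is any unanimous allocation rule, is neither U-FSSP-P nor U-FSSP-O.
   Context: Throughout, $\mathbb{N}=\{1,2,3,\dots\}$. Let $\mathbb{P}=\{p_1,\dots,p_m\}$ be a finite set of projects, $c:\mathbb{P}\to\mathbb{N}$ a cost function with $c(P)=\sum_{p\in P}c(p)$, $B\in\mathbb{N}$ a budget with $c(p)\le B$ for all $p$; agents $\mathcal{N}=\{1,\dots,n\}$. Tie-breaking: for a nonempty family $\mathfrak{P}$ of subsets of $\mathbb{P}$, $T(\mathfrak{P})$ is the unique $P\in\mathfrak{P}$ such that for all $P'\in\mathfrak{P}\setminus\{P\}$ the lowest-index project of $(P\setminus P')\cup(P'\setminus P)$ lies in $P$. Greedy selection $\mathit{GREED}(P,\gg)$, for $P\subseteq\mathbb{P}$ and a strict linear order $\gg$ on $P$, examines projects in the order $\gg$ and selects a project iff doing so keeps the total cost of selected projects at most $B$. Shortlisting stage: shortlisting instance $I=\langle\mathbb{P},c,B\rangle$; shortlisting profile $\boldsymbol{P}=(P_1,\dots,P_n)$, $P_i\subseteq\mathbb{P}$, $\bigcup\boldsymbol{P}=P_1\cup\dots\cup P_n$; $(\boldsymbol{P}_{-i},P_i')$ replaces $P_i$ by $P_i'$. The $k$-equal-representation shortlisting rule returns $R(I,\boldsymbol{P})=T\big(\operatorname*{argmax}_{P\subseteq\bigcup\boldsymbol{P},\ c(P)\le kB}\sum_{i\in\mathcal{N}}\sum_{\ell=0}^{|P_i\cap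 P|}n^{-\ell}\big)$. Each agent $i$ has an awareness set $C_i\subseteq\mathbb{P}$; $\boldsymbol{C}=(C_1,\dots,C_n)$. Allocation stage: allocation instance $\langle\mathcal{P},c,B\rangle$, $\mathcal{P}\subseteq\mathbb{P}$; profile $\boldsymbol{A}=(A_1,\dots,A_n)$, $A_i\subseteq\mathcal{P}$; $A\subseteq\mathcal{P}$ is feasible if $c(A)\le B$; an allocation rule $F$ outputs a feasible $F(I,\boldsymbol{A})$; $F$ is unanimous if for every allocation instance $I$ and every profile $(A,\dots,A)$ with $A$ feasible, $F(I,(A,\dots,A))\supseteq A$. Preferences: each agent $i$ has a strict linear order $\rhd_i$ on $\mathbb{P}$; $\mathit{top}_i(\mathcal{P})=\mathit{GREED}(\mathcal{P},\rhd_i|_{\mathcal{P}})$. For $P\subseteq\mathbb{P}$: overlap model $A\succeq_P A'$ iff $|A\cap P|\ge|A'\cap P|$; cost model $A\succeq_P A'$ iff $c(A\cap P)\ge c(A'\cap P)$; $\succ_P$ its strict part. $\mathit{best}(\succ,\mathfrak{P})$ is the set of elements of $\mathfrak{P}$ undominated w.r.t. $\succ$. Best response: for $I=\langle\mathcal{P},c,B\rangle$, profile $\boldsymbol{A}$, agent $i$: $A_i^\star(I,\boldsymbol{A})=T(\mathit{best}(\succ_{\mathit{top}_i(\mathcal{P})},\{F(I,(\boldsymbol{A}_{-i},A_i'))\mid A_i'\subseteq\mathcal{P}\}))$ and $F^\star(I,\boldsymbol{A})=F(I,(\boldsymbol{A}_{-i},A_i^\star(I,\boldsymbol{A})))$.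 Manipulation: given $R,F$, shortlisting instance $I_1$, profile $\boldsymbol{P}$, agent $i$, $P_i'\subseteq\mathbb{P}$, let $\mathcal{P}=R(I_1,\boldsymbol{P})$, $\mathcal{P}'=R(I_1,(\boldsymbol{P}_{-i},P_i'))$, $I_2=\langle\mathcal{P},c,B\rangle$, $I_2'=\langle\mathcal{P}',c,B\rangle$, $Q=\mathit{top}_i(\mathcal{P}\cup\mathcal{P}')$. $P_i'$ is a successful pessimistic manipulation if for all profiles $\boldsymbol{A}$ on $\mathcal{P}$ and $\boldsymbol{A}'$ on $\mathcal{P}'$, $F^\star(I_2',\boldsymbol{A}')\succeq_Q F^\star(I_2,\boldsymbol{A})$, strictly for at least one pair; a successful optimistic manipulation if for some $\boldsymbol{A}$ on $\mathcal{P}$ and some $\boldsymbol{A}'$ on $\mathcal{P}'$, $F^\star(I_2',\boldsymbol{A}')\succ_Q F^\star(I_2,\boldsymbol{A})$. U-FSSP: for a preference model and a manipulation type, $\langle R,F\rangle$ is U-FSSP if for every shortlisting instance, awareness profile $\boldsymbol{C}$, shortlisting profile $\boldsymbol{P}$ with $P_{i'}\subseteq C_{i'}$ for all $i'$, and agent $i$, there is no $P_i'\subseteq C_i\cup\bigcup\boldsymbol{P}$ such that submitting $P_i'$ instead of $\mathit{top}_i(C_i\cup\bigcup\boldsymbol{P})$ (i.e., going from $(\boldsymbol{P}_{-i},\mathit{top}_i(C_i\cup\bigcup\boldsymbol{P}))$ to $(\boldsymbol{P}_{-i},P_i')$) is a successful manipulation of that type. U-FSSP-P and U-FSSP-O refer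 to pessimistic and optimistic manipulation. *)

theory Defs
  imports Complex_Main
begin

(* Projects are natural numbers; the index of a project is the number itself,
   so "lowest-index project" = minimum.  Profiles are lists indexed by agents
   0..n-1 (n = length of the list).  A cost function is c :: nat => nat,
   only its values on the relevant project set matter. *)

definition tie_break :: "nat set set \<Rightarrow> nat set" where
  "tie_break \<PP> = (THE P. P \<in> \<PP> \<and>
      (\<forall>P'\<in>\<PP>. P' \<noteq> P \<longrightarrow> Min ((P - P') \<union> (P' - P)) \<in> P))"

text \<open>The enumeration of P in the order given by the strict relation r
  ((x,y) \<in> r means x is ranked above y).\<close>
definition order_list :: "(nat \<times> nat) set \<Rightarrow> nat set \<Rightarrow> nat list" where
  "order_list r P = (THE xs. set xs = P \<and> distinct xs \<and> sorted_wrt (\<lambda>x y. (x, y) \<in> r) xs)"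

fun greed_aux :: "nat \<Rightarrow> (nat \<Rightarrow> nat) \<Rightarrow> nat list \<Rightarrow> nat set \<Rightarrow> nat set" where
  "greed_aux B c [] S = S"
| "greed_aux B c (x # xs) S =
     greed_aux B c xs (if sum c (insert x S) \<le> B then insert x S else S)"

definition GREED :: "nat \<Rightarrow> (nat \<Rightarrow> nat) \<Rightarrow> (nat \<times> nat) set \<Rightarrow> nat set \<Rightarrow> nat set" where
  "GREED B c r P = greed_aux B c (order_list r P) {}"

definition top_agent :: "(nat \<Rightarrow> (nat \<times> nat) set) \<Rightarrow> nat \<Rightarrow> nat \<Rightarrow> (nat \<Rightarrow> nat) \<Rightarrow> nat set \<Rightarrow> nat set" where
  "top_agent prefs i B c P = GREED B c (prefs i \<inter> (P \<times> P)) P"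

definition shortlisting_instance :: "nat set \<Rightarrow> (nat \<Rightarrow> nat) \<Rightarrow> nat \<Rightarrow> bool" where
  "shortlisting_instance PP c B \<longleftrightarrow> finite PP \<and> 1 \<le> B \<and> (\<forall>p\<in>PP. 1 \<le> c p \<and> c p \<le> B)"

definition alloc_instance :: "nat set \<Rightarrow> (nat \<Rightarrow> nat) \<Rightarrow> nat \<Rightarrow> bool" where
  "alloc_instance Pc c B \<longleftrightarrow> finite Pc \<and> 1 \<le> B \<and> (\<forall>p\<in>Pc. 1 \<le> c p \<and> c p \<le> B)"

definition profiles_on :: "nat \<Rightarrow> nat set \<Rightarrow> nat set list set" where
  "profiles_on n Pc = {As. length As = n \<and> (\<forall>A\<in>set As. A \<subseteq> Pc)}"

definition eqrep_score :: "nat set list \<Rightarrow> nat set \<Rightarrow> real" where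
  "eqrep_score Ps P = (\<Sum>j<length Ps. \<Sum>l=0..card (Ps ! j \<inter> P). (1 / real (length Ps)) ^ l)"

definition eq_rep :: "nat \<Rightarrow> (nat \<Rightarrow> nat) \<Rightarrow> nat \<Rightarrow> nat set list \<Rightarrow> nat set" where
  "eq_rep k c B Ps = tie_break
     {P. P \<subseteq> \<Union>(set Ps) \<and> sum c P \<le> k * B \<and>
         (\<forall>P'. P' \<subseteq> \<Union>(set Ps) \<and> sum c P' \<le> k * B \<longrightarrow> eqrep_score Ps P' \<le> eqrep_score Ps P)}"

type_synonym alloc_rule = "nat set \<Rightarrow> (nat \<Rightarrow> nat) \<Rightarrow> nat \<Rightarrow> nat set list \<Rightarrow> nat set"

definition allocation_rule :: "alloc_rule \<Rightarrow> bool" where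
  "allocation_rule F \<longleftrightarrow> (\<forall>Pc c B As. alloc_instance Pc c B \<and> 1 \<le> length As \<and> As \<in> profiles_on (length As) Pc
      \<longrightarrow> F Pc c B As \<subseteq> Pc \<and> sum c (F Pc c B As) \<le> B)"

definition unanimous :: "alloc_rule \<Rightarrow> bool" where
  "unanimous F \<longleftrightarrow> (\<forall>Pc c B n A. alloc_instance Pc c B \<and> 1 \<le> n \<and> A \<subseteq> Pc \<and> sum c A \<le> B
      \<longrightarrow> A \<subseteq> F Pc c B (replicate n A))"

datatype pref_model = Overlap | Cost

definition weak_pref :: "pref_model \<Rightarrow> (nat \<Rightarrow> nat) \<Rightarrow> nat set \<Rightarrow> nat set \<Rightarrow> nat set \<Rightarrow> bool" where
  "weak_pref M c Q A A' = (case M of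
       Overlap \<Rightarrow> card (A \<inter> Q) \<ge> card (A' \<inter> Q)
     | Cost \<Rightarrow> sum c (A \<inter> Q) \<ge> sum c (A' \<inter> Q))"

definition strict_pref :: "pref_model \<Rightarrow> (nat \<Rightarrow> nat) \<Rightarrow> nat set \<Rightarrow> nat set \<Rightarrow> nat set \<Rightarrow> bool" where
  "strict_pref M c Q A A' \<longleftrightarrow> weak_pref M c Q A A' \<and> \<not> weak_pref M c Q A' A"

definition best :: "(nat set \<Rightarrow> nat set \<Rightarrow> bool) \<Rightarrow> nat set set \<Rightarrow> nat set set" where
  "best sp \<PP> = {X\<in>\<PP>. \<not> (\<exists>Y\<in>\<PP>. sp Y X)}"

definition best_resp :: "pref_model \<Rightarrow> alloc_rule \<Rightarrow> (nat \<Rightarrow> (nat \<times> nat) set) \<Rightarrow> nat set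
     \<Rightarrow> (nat \<Rightarrow> nat) \<Rightarrow> nat \<Rightarrow> nat set list \<Rightarrow> nat \<Rightarrow> nat set" where
  "best_resp M F prefs Pc c B As i =
     tie_break (best (strict_pref M c (top_agent prefs i B c Pc))
                     {F Pc c B (As[i := A']) | A'. A' \<subseteq> Pc})"

definition F_star :: "pref_model \<Rightarrow> alloc_rule \<Rightarrow> (nat \<Rightarrow> (nat \<times> nat) set) \<Rightarrow> nat set
     \<Rightarrow> (nat \<Rightarrow> nat) \<Rightarrow> nat \<Rightarrow> nat set list \<Rightarrow> nat \<Rightarrow> nat set" where
  "F_star M F prefs Pc c B As i = F Pc c B (As[i := best_resp M F prefs Pc c B As i])"

datatype manip_kind = Pessimistic | Optimistic

type_synonym shortlist_rule = "(nat \<Rightarrow> nat) \<Rightarrow> nat \<Rightarrow> nat set list \<Rightarrow> nat set"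

definition successful_manip :: "manip_kind \<Rightarrow> pref_model \<Rightarrow> shortlist_rule \<Rightarrow> alloc_rule
     \<Rightarrow> (nat \<Rightarrow> (nat \<times> nat) set) \<Rightarrow> (nat \<Rightarrow> nat) \<Rightarrow> nat \<Rightarrow> nat set list \<Rightarrow> nat \<Rightarrow> nat set \<Rightarrow> bool" where
  "successful_manip kind M R F prefs c B Ps i P' =
     (let Pc = R c B Ps; Pc' = R c B (Ps[i := P']); Q = top_agent prefs i B c (Pc \<union> Pc');
          n = length Ps
      in case kind of
        Pessimistic \<Rightarrow>
          (\<forall>As\<in>profiles_on n Pc. \<forall>As'\<in>profiles_on n Pc'.
              weak_pref M c Q (F_star M F prefs Pc' c B As' i) (F_star M F prefs Pc c B As i)) \<and>
          (\<exists>As\<in>profiles_on n Pc. \<exists>As'\<in>profiles_on n Pc'.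
              strict_pref M c Q (F_star M F prefs Pc' c B As' i) (F_star M F prefs Pc c B As i))
      | Optimistic \<Rightarrow>
          (\<exists>As\<in>profiles_on n Pc. \<exists>As'\<in>profiles_on n Pc'.
              strict_pref M c Q (F_star M F prefs Pc' c B As' i) (F_star M F prefs Pc c B As i)))"

definition U_FSSP :: "manip_kind \<Rightarrow> pref_model \<Rightarrow> shortlist_rule \<Rightarrow> alloc_rule \<Rightarrow> bool" where
  "U_FSSP kind M R F \<longleftrightarrow>
     (\<forall>PP c B prefs Cs Ps i.
        shortlisting_instance PP c B \<and>
        (\<forall>j<length Ps. prefs j \<subseteq> PP \<times> PP \<and> strict_linear_order_on PP (prefs j)) \<and>
        length Cs = length Ps \<and>
        (\<forall>j<length Ps. Cs ! j \<subseteq> PP \<and> Ps ! j \<subseteq> Cs ! j) \<and>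
        i < length Ps
      \<longrightarrow> \<not> (\<exists>P'. P' \<subseteq> Cs ! i \<union> \<Union>(set Ps) \<and>
               successful_manip kind M R F prefs c B
                 (Ps[i := top_agent prefs i B c (Cs ! i \<union> \<Union>(set Ps))]) i P'))"

end

theory Submission
  imports Defs
begin

(* With budget 3 and k + 1 agents, agent 0 approves {0, 2}, agent 1 approves {1, 3}, and each
   further agent approves a project of its own of cost 3; projects 0, 1, 2, 3 cost 2, 3, 1, 2.
   Representing every agent within the shortlist budget 3k forces the cheap projects 2 and 3,
   so the truthful shortlist is {2, ..., k + 2}.  Agent 0 ranks projects by index and is also
   aware of project 1, her favourite, which exhausts the budget on its own.  Reporting {1} makes
   the rule shortlist 1 instead of 3; a unanimous profile for 1 then funds exactly {1}, while
   no outcome on the truthful shortlist contains 1.  Hence every outcome after the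
   manipulation is weakly better for her and some is strictly better, in either preference
   model. *)

section \<open>Lexicographic tie-breaking\<close>

definition binary_weight :: "nat set \<Rightarrow> real" where
  "binary_weight P = (\<Sum>x\<in>P. (1/2) ^ x)"

lemma sum_half_powers_interval:
  "(\<Sum>x\<in>{Suc m..<Suc m + N}. (1/2::real) ^ x) = (1/2) ^ m - (1/2) ^ (m + N)"
  by (induction N) (auto simp: power_add)

lemma sum_half_powers_above_less:
  assumes "finite A" and "\<forall>x\<in>A. m < x"
  shows "(\<Sum>x\<in>A. (1/2::real) ^ x) < (1/2) ^ m"
proof -
  obtain N where "\<forall>x\<in>A. x < N"
    using assms(1) finite_nat_set_iff_bounded by blast
  then have "A \<subseteq> {Suc m..<Suc m + N}"
    using assms(2) by fastforce
  then have "(\<Sum>x\<in>A. (1/2::real) ^ x) \<le> (\<Sum>x\<in>{Suc m..<Suc m + N}. (1/2) ^ x)"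
    by (intro sum_mono2) auto
  also have "\<dots> < (1/2) ^ m"
    unfolding sum_half_powers_interval by simp
  finally show ?thesis .
qed

text \<open>The smallest element of the symmetric difference outweighs everything above it, so
  the tie-breaking rule selects exactly the set of largest binary weight.\<close>
lemma binary_weight_less:
  assumes "finite P" "finite P'" "P \<noteq> P'" "Min ((P - P') \<union> (P' - P)) \<in> P"
  shows "binary_weight P' < binary_weight P"
proof -
  define m where "m = Min ((P - P') \<union> (P' - P))"
  have m_in: "m \<in> P - P'"
    using assms Min_in[of "(P - P') \<union> (P' - P)"] unfolding m_def by auto
  have above: "\<forall>x\<in>P' - P. m < x"
  proof
    fix x assume x: "x \<in> P' - P"
    then have "m \<le> x"
      unfolding m_def using assms(1,2) by (intro Min_le) auto
    with x m_in show "m < x" by (cases "m = x") auto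
  qed
  have "binary_weight P' = (\<Sum>x\<in>P \<inter> P'. (1/2) ^ x) + (\<Sum>x\<in>P' - P. (1/2) ^ x)"
    unfolding binary_weight_def using assms(2) sum.Int_Diff[of P' _ P] by (simp add: Int_commute)
  also have "\<dots> < (\<Sum>x\<in>P \<inter> P'. (1/2) ^ x) + (1/2) ^ m"
    using sum_half_powers_above_less[OF _ above] assms(2) by simp
  also have "\<dots> \<le> (\<Sum>x\<in>P \<inter> P'. (1/2) ^ x) + (\<Sum>x\<in>P - P'. (1/2) ^ x)"
    using m_in assms(1) by (simp add: member_le_sum)
  also have "\<dots> = binary_weight P"
    unfolding binary_weight_def using assms(1) by (rule sum.Int_Diff[symmetric])
  finally show ?thesis .
qed

lemma finite_obtains_maximizer:
  fixes f :: "'a \<Rightarrow> 'b::linorder"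
  assumes "finite A" "A \<noteq> {}"
  obtains x where "x \<in> A" "\<forall>y\<in>A. f y \<le> f x"
proof -
  have "Max (f ` A) \<in> f ` A"
    using assms by simp
  then obtain x where "x \<in> A" "f x = Max (f ` A)"
    by auto
  with assms that show thesis by simp
qed

lemma tie_break_eqI:
  assumes "Z \<in> \<PP>" and "\<forall>P\<in>\<PP>. finite P"
    and "\<forall>P\<in>\<PP>. P \<noteq> Z \<longrightarrow> Min ((Z - P) \<union> (P - Z)) \<in> Z"
  shows "tie_break \<PP> = Z"
  unfolding tie_break_def
proof (rule the_equality)
  fix P assume P: "P \<in> \<PP> \<and> (\<forall>P'\<in>\<PP>. P' \<noteq> P \<longrightarrow> Min ((P - P') \<union> (P' - P)) \<in> P)"
  show "P = Z"
  proof (rule ccontr)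
    assume "P \<noteq> Z"
    then have "Min ((P - Z) \<union> (Z - P)) \<in> P" "Min ((P - Z) \<union> (Z - P)) \<in> Z"
      using P assms by (auto simp: Un_commute)
    moreover have "Min ((P - Z) \<union> (Z - P)) \<in> (P - Z) \<union> (Z - P)"
      using assms P \<open>P \<noteq> Z\<close> by (intro Min_in) auto
    ultimately show False by blast
  qed
qed (use assms in blast)

lemma tie_break_in:
  assumes "finite \<PP>" "\<PP> \<noteq> {}" "\<forall>P\<in>\<PP>. finite P"
  shows "tie_break \<PP> \<in> \<PP>"
proof -
  obtain Z where Z: "Z \<in> \<PP>" "\<forall>P\<in>\<PP>. binary_weight P \<le> binary_weight Z"
    using finite_obtains_maximizer[OF assms(1,2)] by blast
  have "tie_break \<PP> = Z"
  proof (rule tie_break_eqI[OF Z(1) assms(3)], intro ballI impI)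
    fix P assume P: "P \<in> \<PP>" "P \<noteq> Z"
    have "Min ((Z - P) \<union> (P - Z)) \<in> (Z - P) \<union> (P - Z)"
      using assms(3) P Z(1) by (intro Min_in) auto
    moreover have "Min ((P - Z) \<union> (Z - P)) \<notin> P"
      using binary_weight_less[of P Z] assms(3) P Z by fastforce
    ultimately show "Min ((Z - P) \<union> (P - Z)) \<in> Z" by (auto simp: Un_commute)
  qed
  with Z(1) show ?thesis by simp
qed

lemma tie_break_singleton [simp]: "tie_break {Z} = Z"
  unfolding tie_break_def by (rule the_equality) auto

section \<open>Greedy selection in index order\<close>

definition less_on :: "nat set \<Rightarrow> (nat \<times> nat) set" where
  "less_on P = {(p, q) \<in> P \<times> P. p < q}"

lemma strict_linear_order_on_less_on: "strict_linear_order_on P (less_on P)"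
  unfolding strict_linear_order_on_def trans_def irrefl_def total_on_def less_on_def by auto

lemma less_on_Int_Times: "Q \<subseteq> P \<Longrightarrow> less_on P \<inter> Q \<times> Q = less_on Q"
  unfolding less_on_def by auto

lemma order_list_less_on:
  assumes "finite P"
  shows "order_list (less_on P) P = sorted_list_of_set P"
proof -
  have sorted_iff: "sorted_wrt (\<lambda>x y. (x, y) \<in> less_on P) xs \<longleftrightarrow> sorted_wrt (<) xs"
    if "set xs \<subseteq> P" for xs
    using that by (induction xs) (auto simp: less_on_def)
  show ?thesis
    unfolding order_list_def
  proof (rule the_equality)
    show "set (sorted_list_of_set P) = P \<and> distinct (sorted_list_of_set P) \<and>
        sorted_wrt (\<lambda>x y. (x, y) \<in> less_on P) (sorted_list_of_set P)"
      using assms sorted_iff by simp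
    fix xs assume "set xs = P \<and> distinct xs \<and> sorted_wrt (\<lambda>x y. (x, y) \<in> less_on P) xs"
    then show "xs = sorted_list_of_set P"
      using assms sorted_iff by (intro strict_sorted_equal) auto
  qed
qed

lemma GREED_less_on:
  "finite P \<Longrightarrow> GREED B c (less_on P) P = greed_aux B c (sorted_list_of_set P) {}"
  by (simp add: GREED_def order_list_less_on)

lemma greed_aux_no_fit:
  assumes "finite S" and "\<forall>x\<in>set xs. x \<notin> S \<and> B < sum c S + c x"
  shows "greed_aux B c xs S = S"
  using assms(2) by (induction xs) (auto simp: assms(1))

lemma GREED_less_on_Min:
  assumes "finite P" "P \<noteq> {}" "c (Min P) = B" "\<forall>p\<in>P. 0 < c p"
  shows "GREED B c (less_on P) P = {Min P}"
proof -
  have "GREED B c (less_on P) P = greed_aux B c (sorted_list_of_set (P - {Min P})) {Min P}"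
    using assms(1-3) by (simp add: GREED_less_on sorted_list_of_set_nonempty)
  also have "\<dots> = {Min P}"
    using assms by (intro greed_aux_no_fit) auto
  finally show ?thesis .
qed

section \<open>The equal-representation rule\<close>

lemma eqrep_score_missing_less:
  assumes "j0 < length Ps" and "Ps ! j0 \<inter> P = {}"
  shows "eqrep_score Ps P < real (length Ps) + 1"
proof -
  define n where "n = length Ps"
  define r where "r = 1 / real n"
  define t where "t j = (\<Sum>l=0..card (Ps ! j \<inter> P). r ^ l)" for j
  have "eqrep_score Ps P = (\<Sum>j<n. t j)"
    unfolding eqrep_score_def t_def r_def n_def ..
  also have "\<dots> = 1 + (\<Sum>j\<in>{..<n} - {j0}. t j)"
    using assms by (simp add: sum.remove[of _ j0] t_def n_def)
  also have "\<dots> < 1 + real n"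
  proof (cases "n = 1")
    case True
    then show ?thesis using assms by (simp add: n_def lessThan_Suc)
  next
    case False
    with assms have n: "2 \<le> n" unfolding n_def by linarith
    then have r: "0 < r" "r < 1" unfolding r_def by auto
    have other: "(if j0 = 0 then 1 else 0) \<in> {..<n} - {j0}"
      using n by auto
    have "(\<Sum>j\<in>{..<n} - {j0}. t j) < (\<Sum>j\<in>{..<n} - {j0}. 1 / (1 - r))"
      unfolding t_def using r other
      by (intro sum_strict_mono geometric_sum_less) auto
    also have "\<dots> = real n"
      using n assms(1) by (simp add: r_def of_nat_diff field_simps flip: n_def)
    finally show ?thesis by simp
  qed
  finally show ?thesis unfolding n_def by simp
qed

lemma eqrep_score_representing_ge:
  assumes "Ps \<noteq> []" and "finite P" and "\<forall>A\<in>set Ps. A \<inter> P \<noteq> {}"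
  shows "real (length Ps) + 1 \<le> eqrep_score Ps P"
proof -
  define r where "r = 1 / real (length Ps)"
  have "real (length Ps) + 1 = (\<Sum>j<length Ps. \<Sum>l=0..1. r ^ l)"
    using assms(1) by (simp add: r_def field_simps)
  also have "\<dots> \<le> eqrep_score Ps P"
    unfolding eqrep_score_def r_def[symmetric]
  proof (intro sum_mono sum_mono2)
    fix j assume "j \<in> {..<length Ps}"
    then have "Ps ! j \<inter> P \<noteq> {}" using assms(3) by simp
    then show "{0..1} \<subseteq> {0..card (Ps ! j \<inter> P)}"
      using assms(2) by (simp add: Suc_le_eq card_gt_0_iff)
  qed (auto simp: r_def)
  finally show ?thesis .
qed

lemma eq_rep_eqI:
  assumes "Ps \<noteq> []"
    and "Pst \<subseteq> \<Union>(set Ps)" "sum c Pst \<le> k * B" "finite Pst" "\<forall>A\<in>set Ps. A \<inter> Pst \<noteq> {}"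
    and "\<And>P. P \<subseteq> \<Union>(set Ps) \<Longrightarrow> sum c P \<le> k * B \<Longrightarrow> \<forall>A\<in>set Ps. A \<inter> P \<noteq> {} \<Longrightarrow> P = Pst"
  shows "eq_rep k c B Ps = Pst"
proof -
  have less: "eqrep_score Ps P < eqrep_score Ps Pst"
    if P: "P \<subseteq> \<Union>(set Ps)" "sum c P \<le> k * B" "P \<noteq> Pst" for P
  proof -
    obtain A where "A \<in> set Ps" "A \<inter> P = {}"
      using assms(6)[OF P(1,2)] P(3) by blast
    then obtain j0 where "j0 < length Ps" "Ps ! j0 \<inter> P = {}"
      by (auto simp: in_set_conv_nth)
    then have "eqrep_score Ps P < real (length Ps) + 1"
      by (rule eqrep_score_missing_less)
    also have "\<dots> \<le> eqrep_score Ps Pst"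
      using assms(1,4,5) by (rule eqrep_score_representing_ge)
    finally show ?thesis .
  qed
  have "{P. P \<subseteq> \<Union>(set Ps) \<and> sum c P \<le> k * B \<and>
      (\<forall>P'. P' \<subseteq> \<Union>(set Ps) \<and> sum c P' \<le> k * B \<longrightarrow> eqrep_score Ps P' \<le> eqrep_score Ps P)} = {Pst}"
  proof (intro equalityI subsetI)
    fix P assume "P \<in> {P. P \<subseteq> \<Union>(set Ps) \<and> sum c P \<le> k * B \<and>
      (\<forall>P'. P' \<subseteq> \<Union>(set Ps) \<and> sum c P' \<le> k * B \<longrightarrow> eqrep_score Ps P' \<le> eqrep_score Ps P)}"
    then show "P \<in> {Pst}"
      using assms(2,3) less[of P] by (auto simp: not_less[symmetric])
  next
    fix P assume "P \<in> {Pst}"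
    then show "P \<in> {P. P \<subseteq> \<Union>(set Ps) \<and> sum c P \<le> k * B \<and>
      (\<forall>P'. P' \<subseteq> \<Union>(set Ps) \<and> sum c P' \<le> k * B \<longrightarrow> eqrep_score Ps P' \<le> eqrep_score Ps P)}"
      using assms(2,3) less by (auto simp: order.order_iff_strict)
  qed
  then show ?thesis
    unfolding eq_rep_def by simp
qed

section \<open>Best responses and manipulation\<close>

definition utility :: "pref_model \<Rightarrow> (nat \<Rightarrow> nat) \<Rightarrow> nat set \<Rightarrow> nat set \<Rightarrow> nat" where
  "utility M c Q A = (case M of Overlap \<Rightarrow> card (A \<inter> Q) | Cost \<Rightarrow> sum c (A \<inter> Q))"

lemma weak_pref_iff_utility: "weak_pref M c Q A A' \<longleftrightarrow> utility M c Q A' \<le> utility M c Q A"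
  by (cases M) (auto simp: weak_pref_def utility_def)

lemma strict_pref_iff_utility: "strict_pref M c Q A A' \<longleftrightarrow> utility M c Q A' < utility M c Q A"
  unfolding strict_pref_def weak_pref_iff_utility by auto

lemma utility_disjoint: "A \<inter> Q = {} \<Longrightarrow> utility M c Q A = 0"
  by (cases M) (simp_all add: utility_def)

lemma utility_singleton_pos: "0 < c p \<Longrightarrow> 0 < utility M c {p} {p}"
  by (cases M) (simp_all add: utility_def)

lemma utility_le_singleton: "utility M c {p} A \<le> utility M c {p} {p}"
  by (cases M) (simp_all add: utility_def Int_insert_right)

lemma best_nonempty:
  assumes "finite \<PP>" "\<PP> \<noteq> {}"
  shows "best (strict_pref M c Q) \<PP> \<noteq> {}"
proof -
  obtain Z where "Z \<in> \<PP>" "\<forall>Y\<in>\<PP>. utility M c Q Y \<le> utility M c Q Z"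
    using finite_obtains_maximizer[OF assms] by blast
  then have "Z \<in> best (strict_pref M c Q) \<PP>"
    unfolding best_def strict_pref_iff_utility by (auto simp: not_less)
  then show ?thesis by blast
qed

lemma profiles_on_update: "As \<in> profiles_on n Pc \<Longrightarrow> A \<subseteq> Pc \<Longrightarrow> As[i := A] \<in> profiles_on n Pc"
  unfolding profiles_on_def by (auto dest: set_update_subset_insert[THEN subsetD])

lemma allocation_rule_feasible:
  assumes "allocation_rule F" "alloc_instance Pc c B" "As \<in> profiles_on n Pc" "1 \<le> n"
  shows "F Pc c B As \<subseteq> Pc" and "sum c (F Pc c B As) \<le> B"
  using assms unfolding allocation_rule_def profiles_on_def by auto

lemma F_star_subset:
  assumes F: "allocation_rule F" and I: "alloc_instance Pc c B"
    and As: "As \<in> profiles_on n Pc" and n: "1 \<le> n"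
  shows "F_star M F prefs Pc c B As i \<subseteq> Pc"
proof -
  define \<PP> where "\<PP> = {F Pc c B (As[i := A']) | A'. A' \<subseteq> Pc}"
  define \<BB> where "\<BB> = best (strict_pref M c (top_agent prefs i B c Pc)) \<PP>"
  have fin: "finite Pc" using I unfolding alloc_instance_def by simp
  have \<PP>_sub: "\<forall>X\<in>\<PP>. X \<subseteq> Pc"
    unfolding \<PP>_def using allocation_rule_feasible(1)[OF F I profiles_on_update[OF As] n] by auto
  have "\<PP> = (\<lambda>A'. F Pc c B (As[i := A'])) ` Pow Pc"
    unfolding \<PP>_def by auto
  then have "finite \<PP>" "\<PP> \<noteq> {}"
    using fin by auto
  moreover have "\<BB> \<subseteq> \<PP>"
    unfolding \<BB>_def best_def by auto
  ultimately have "tie_break \<BB> \<in> \<BB>"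
    using best_nonempty[of \<PP> M c] \<PP>_sub finite_subset[OF _ fin] unfolding \<BB>_def
    by (intro tie_break_in) (auto intro: finite_subset)
  then have "As[i := tie_break \<BB>] \<in> profiles_on n Pc"
    using \<open>\<BB> \<subseteq> \<PP>\<close> \<PP>_sub by (intro profiles_on_update[OF As]) auto
  then show ?thesis
    using allocation_rule_feasible(1)[OF F I _ n]
    unfolding F_star_def best_resp_def \<PP>_def[symmetric] \<BB>_def[symmetric] by blast
qed

lemma best_strict_pref_singleton:
  assumes "{p} \<in> \<PP>" and "\<forall>X\<in>\<PP>. p \<in> X \<longrightarrow> X = {p}" and "0 < c p"
  shows "best (strict_pref M c {p}) \<PP> = {{p}}"
proof (intro equalityI subsetI)
  fix X assume X: "X \<in> best (strict_pref M c {p}) \<PP>"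
  then have "\<not> strict_pref M c {p} {p} X"
    using assms(1) unfolding best_def by blast
  then have "p \<in> X"
    using utility_disjoint[of X "{p}" M c] utility_singleton_pos[of c p M] assms(3)
    by (auto simp: strict_pref_iff_utility)
  with X assms(2) show "X \<in> {{p}}"
    unfolding best_def by auto
next
  fix X assume "X \<in> {{p}}"
  then show "X \<in> best (strict_pref M c {p}) \<PP>"
    using assms(1) utility_le_singleton
    unfolding best_def strict_pref_iff_utility by (auto simp: not_less)
qed

lemma eq_singleton_if_no_affordable_partner:
  fixes c :: "'a \<Rightarrow> nat"
  assumes "finite Pc" "X \<subseteq> Pc" "sum c X \<le> B" "p \<in> X" "\<forall>q\<in>Pc - {p}. B < c p + c q"
  shows "X = {p}"
proof (rule ccontr)
  assume "X \<noteq> {p}"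
  then obtain q where q: "q \<in> X" "q \<noteq> p"
    using assms(4) by blast
  have "B < c p + c q"
    using assms(2,5) q by blast
  also have "\<dots> = sum c {p, q}"
    using q(2) by simp
  also have "\<dots> \<le> sum c X"
    using finite_subset[OF assms(2,1)] assms(4) q by (intro sum_mono2) auto
  also have "\<dots> \<le> B"
    by (rule assms(3))
  finally show False
    by simp
qed

lemma F_star_replicate_singleton:
  assumes F: "allocation_rule F" "unanimous F" and I: "alloc_instance Pc c B"
    and p: "p \<in> Pc" "\<forall>q\<in>Pc - {p}. B < c p + c q"
    and top: "top_agent prefs i B c Pc = {p}" and n: "1 \<le> n"
  shows "F_star M F prefs Pc c B (replicate n {p}) i = {p}"
proof -
  define As where "As = replicate n {p}"
  define \<PP> where "\<PP> = {F Pc c B (As[i := A]) | A. A \<subseteq> Pc}"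
  have As: "As \<in> profiles_on n Pc"
    unfolding As_def profiles_on_def using p(1) by auto
  have fin: "finite Pc" and "0 < c p" "c p \<le> B"
    using I p(1) unfolding alloc_instance_def by auto
  have only_p: "\<forall>X\<in>\<PP>. p \<in> X \<longrightarrow> X = {p}"
  proof (intro ballI impI)
    fix X assume "X \<in> \<PP>" "p \<in> X"
    then obtain A where "A \<subseteq> Pc" "X = F Pc c B (As[i := A])"
      unfolding \<PP>_def by blast
    then show "X = {p}"
      using allocation_rule_feasible[OF F(1) I profiles_on_update[OF As] n] \<open>p \<in> X\<close>
      by (intro eq_singleton_if_no_affordable_partner[OF fin _ _ _ p(2)]) auto
  qed
  have As_upd: "As[i := {p}] = As"
    unfolding As_def by (cases "i < n") (simp_all add: list_update_same_conv list_update_beyond)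
  have "F Pc c B As \<in> \<PP>"
    unfolding \<PP>_def using As_upd p(1) by force
  moreover have "{p} \<subseteq> F Pc c B As"
    unfolding As_def using I p(1) \<open>c p \<le> B\<close> n
    by (intro F(2)[unfolded unanimous_def, rule_format]) auto
  ultimately have F_As: "F Pc c B As = {p}"
    using only_p by blast
  \<comment> \<open>The best response is the outcome \<open>{p}\<close> itself, and submitting it as a ballot
    restores the unanimous profile.\<close>
  have "best (strict_pref M c {p}) \<PP> = {{p}}"
    using \<open>F Pc c B As \<in> \<PP>\<close> only_p \<open>0 < c p\<close> unfolding F_As by (rule best_strict_pref_singleton)
  then show ?thesis
    unfolding F_star_def best_resp_def top \<PP>_def[symmetric] As_def[symmetric]
    using As_upd F_As by simp
qed

lemma successful_manip_if_top_unreachable: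
  fixes R :: shortlist_rule and c :: "nat \<Rightarrow> nat" and B i :: nat and Ps :: "nat set list"
    and P' :: "nat set" and prefs :: "nat \<Rightarrow> (nat \<times> nat) set"
  defines "Pc \<equiv> R c B Ps" and "Pc' \<equiv> R c B (Ps[i := P'])"
    and "Q \<equiv> top_agent prefs i B c (R c B Ps \<union> R c B (Ps[i := P']))"
  assumes F: "allocation_rule F" and I: "alloc_instance Pc c B" and "Ps \<noteq> []"
    and unreachable: "Q \<inter> Pc = {}"
    and As': "As' \<in> profiles_on (length Ps) Pc'"
    and gain: "0 < utility M c Q (F_star M F prefs Pc' c B As' i)"
  shows "successful_manip kind M R F prefs c B Ps i P'"
proof -
  have "1 \<le> length Ps"
    using \<open>Ps \<noteq> []\<close> by (simp add: Suc_le_eq)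
  then have zero: "utility M c Q (F_star M F prefs Pc c B As i) = 0"
    if "As \<in> profiles_on (length Ps) Pc" for As
    using F_star_subset[OF F I that] unreachable by (intro utility_disjoint) blast
  have "replicate (length Ps) {} \<in> profiles_on (length Ps) Pc"
    unfolding profiles_on_def by simp
  moreover have "top_agent prefs i B c (Pc \<union> Pc') = Q"
    unfolding Q_def Pc_def Pc'_def ..
  ultimately show ?thesis
    using As' gain zero
    unfolding successful_manip_def Let_def Pc_def[symmetric] Pc'_def[symmetric]
    by (cases kind) (auto simp: weak_pref_iff_utility strict_pref_iff_utility)
qed

section \<open>The counterexample\<close>

definition ex_cost :: "nat \<Rightarrow> nat" where
  "ex_cost p = (if p = 0 then 2 else if p = 1 then 3 else if p = 2 then 1 else if p = 3 then 2 else 3)"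

definition ex_ballots :: "nat \<Rightarrow> nat set list" where
  "ex_ballots k = {0, 2} # {1, 3} # map (\<lambda>p. {p}) [4..<k + 3]"

lemma ex_cost_bounds: "1 \<le> ex_cost p" "ex_cost p \<le> 3"
  by (simp_all add: ex_cost_def)

lemma sum_ex_cost_tail: "sum ex_cost {4..k + 2} = 3 * (k - 1)"
  by (simp add: ex_cost_def)

lemma sum_ex_cost_shortlist:
  assumes "1 \<le> k"
  shows "sum ex_cost {2..k + 2} = 3 * k"
proof -
  have "{2..k + 2} = insert 2 (insert 3 {4..k + 2})"
    using assms by auto
  then show ?thesis
    using assms by (simp only: sum.insert finite_atLeastAtMost sum_ex_cost_tail) (auto simp: ex_cost_def)
qed

lemma ex_cost_pair_le:
  assumes "finite P" "{4..k + 2} \<subseteq> P" "sum ex_cost P \<le> k * 3"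
    and "a \<in> P" "b \<in> P" "a \<noteq> b" "a \<le> 3" "b \<le> 3" "1 \<le> k"
  shows "ex_cost a + ex_cost b \<le> 3"
proof -
  have "ex_cost a + ex_cost b + 3 * (k - 1) = sum ex_cost {a, b} + sum ex_cost {4..k + 2}"
    unfolding sum_ex_cost_tail using assms(6) by simp
  also have "\<dots> = sum ex_cost ({a, b} \<union> {4..k + 2})"
    using assms(7,8) by (intro sum.union_disjoint[symmetric]) auto
  also have "\<dots> \<le> sum ex_cost P"
    using assms(1,2,4,5) by (intro sum_mono2) auto
  finally show ?thesis
    using assms(3,9) by simp
qed

lemma ex_representing_superset:
  "\<forall>A\<in>set (ex_ballots k). A \<inter> P \<noteq> {} \<Longrightarrow> {4..k + 2} \<subseteq> P"
  by (auto simp: ex_ballots_def)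

lemma union_ex_ballots: "1 \<le> k \<Longrightarrow> \<Union>(set (ex_ballots k)) = {0..k + 2}"
  by (auto simp: ex_ballots_def)

lemma union_ex_ballots_update: "\<Union>(set ((ex_ballots k)[0 := {1}])) = insert 1 (insert 3 {4..k + 2})"
  by (auto simp: ex_ballots_def)

lemma eq_rep_ex_ballots:
  assumes "1 \<le> k"
  shows "eq_rep k ex_cost 3 (ex_ballots k) = {2..k + 2}"
proof (rule eq_rep_eqI)
  fix P assume P: "P \<subseteq> \<Union>(set (ex_ballots k))" "sum ex_cost P \<le> k * 3"
    "\<forall>A\<in>set (ex_ballots k). A \<inter> P \<noteq> {}"
  have fin: "finite P" and sub: "P \<subseteq> {0..k + 2}"
    using P(1) union_ex_ballots[OF assms] by (auto intro: finite_subset)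
  note pair = ex_cost_pair_le[OF fin ex_representing_superset[OF P(3)] P(2) _ _ _ _ _ assms]
  have hit: "0 \<in> P \<or> 2 \<in> P" "1 \<in> P \<or> 3 \<in> P"
    using P(3) by (auto simp: ex_ballots_def)
  then have "0 \<notin> P"
    using pair[of 0 1] pair[of 0 3] by (auto simp: ex_cost_def)
  then have "2 \<in> P" "1 \<notin> P"
    using hit pair[of 1 2] by (auto simp: ex_cost_def)
  then have "{2, 3} \<union> {4..k + 2} \<subseteq> P" "P \<subseteq> {0..k + 2} - {0, 1}"
    using sub hit \<open>0 \<notin> P\<close> ex_representing_superset[OF P(3)] by auto
  moreover have "{2, 3} \<union> {4..k + 2} = {2..k + 2}" "{0..k + 2} - {0, 1} = {2..k + 2}"
    using assms by auto
  ultimately show "P = {2..k + 2}"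
    by blast
next
  show "sum ex_cost {2..k + 2} \<le> k * 3"
    using sum_ex_cost_shortlist[OF assms] by simp
qed (use assms in \<open>auto simp: ex_ballots_def\<close>)

lemma eq_rep_ex_ballots_update:
  assumes "1 \<le> k"
  shows "eq_rep k ex_cost 3 ((ex_ballots k)[0 := {1}]) = insert 1 {4..k + 2}"
proof (rule eq_rep_eqI)
  fix P assume P: "P \<subseteq> \<Union>(set ((ex_ballots k)[0 := {1}]))" "sum ex_cost P \<le> k * 3"
    "\<forall>A\<in>set ((ex_ballots k)[0 := {1}]). A \<inter> P \<noteq> {}"
  have fin: "finite P" and sub: "P \<subseteq> insert 1 (insert 3 {4..k + 2})"
    using P(1) union_ex_ballots_update by (auto intro: finite_subset)
  have "1 \<in> P" and tail: "{4..k + 2} \<subseteq> P"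
    using P(3) by (auto simp: ex_ballots_def)
  with ex_cost_pair_le[OF fin tail P(2) _ _ _ _ _ assms, of 1 3] have "3 \<notin> P"
    by (auto simp: ex_cost_def)
  with sub tail \<open>1 \<in> P\<close> show "P = insert 1 {4..k + 2}"
    by auto
next
  show "sum ex_cost (insert 1 {4..k + 2}) \<le> k * 3"
    using assms by (simp add: sum_ex_cost_tail ex_cost_def)
qed (auto simp: ex_ballots_def)

definition ex_prefs :: "nat \<Rightarrow> nat \<Rightarrow> (nat \<times> nat) set" where
  "ex_prefs k i = less_on {0..k + 2}"

lemma top_agent_ex_prefs:
  "P \<subseteq> {0..k + 2} \<Longrightarrow> top_agent (ex_prefs k) i B c P = GREED B c (less_on P) P"
  by (simp add: top_agent_def ex_prefs_def less_on_Int_Times)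

lemma top_agent_ex_all: "top_agent (ex_prefs k) i 3 ex_cost {0..k + 2} = {0, 2}"
proof -
  have "{0..k + 2} = {0..<k + 3}"
    by auto
  then have "sorted_list_of_set {0..k + 2} = 0 # 1 # 2 # [3..<k + 3]"
    by (simp add: upt_conv_Cons numeral_3_eq_3 del: upt_Suc)
  then have "top_agent (ex_prefs k) i 3 ex_cost {0..k + 2} = greed_aux 3 ex_cost [3..<k + 3] {0, 2}"
    by (simp add: top_agent_ex_prefs GREED_less_on ex_cost_def insert_commute)
  also have "\<dots> = {0, 2}"
    by (intro greed_aux_no_fit) (auto simp: ex_cost_def)
  finally show ?thesis .
qed

lemma top_agent_ex_one:
  assumes "1 \<in> P" "P \<subseteq> {1..k + 2}"
  shows "top_agent (ex_prefs k) i 3 ex_cost P = {1}"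
proof -
  have fin: "finite P"
    using assms(2) by (rule finite_subset) simp
  then have min: "Min P = 1"
    using assms by (intro Min_eqI) auto
  have "top_agent (ex_prefs k) i 3 ex_cost P = GREED 3 ex_cost (less_on P) P"
    using assms(2) by (intro top_agent_ex_prefs) auto
  also have "\<dots> = {Min P}"
    using fin assms(1) min ex_cost_bounds(1)
    by (intro GREED_less_on_Min) (auto simp: ex_cost_def Suc_le_eq)
  finally show ?thesis
    unfolding min .
qed

lemma ex_successful_manip:
  assumes k: "1 \<le> k" and F: "allocation_rule F" "unanimous F"
  shows "successful_manip kind M (eq_rep k) F (ex_prefs k) ex_cost 3 (ex_ballots k) 0 {1}"
proof (rule successful_manip_if_top_unreachable)
  let ?Pc' = "eq_rep k ex_cost 3 ((ex_ballots k)[0 := {1}])"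
  have Pc': "?Pc' = insert 1 {4..k + 2}"
    using k by (rule eq_rep_ex_ballots_update)
  have top: "top_agent (ex_prefs k) 0 3 ex_cost (eq_rep k ex_cost 3 (ex_ballots k) \<union> ?Pc') = {1}"
    unfolding eq_rep_ex_ballots[OF k] Pc' by (intro top_agent_ex_one) auto
  show "alloc_instance (eq_rep k ex_cost 3 (ex_ballots k)) ex_cost 3"
    unfolding eq_rep_ex_ballots[OF k] alloc_instance_def using ex_cost_bounds by auto
  show "ex_ballots k \<noteq> []"
    by (simp add: ex_ballots_def)
  show "top_agent (ex_prefs k) 0 3 ex_cost (eq_rep k ex_cost 3 (ex_ballots k) \<union> ?Pc')
      \<inter> eq_rep k ex_cost 3 (ex_ballots k) = {}"
    unfolding top unfolding eq_rep_ex_ballots[OF k] by simp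
  show "replicate (length (ex_ballots k)) {1} \<in> profiles_on (length (ex_ballots k)) ?Pc'"
    unfolding Pc' profiles_on_def by simp
  have "F_star M F (ex_prefs k) ?Pc' ex_cost 3 (replicate (length (ex_ballots k)) {1}) 0 = {1}"
    unfolding Pc' using F
  proof (rule F_star_replicate_singleton)
    show "alloc_instance (insert 1 {4..k + 2}) ex_cost 3"
      unfolding alloc_instance_def using ex_cost_bounds by auto
    show "\<forall>q\<in>insert 1 {4..k + 2} - {1}. 3 < ex_cost 1 + ex_cost q"
      using ex_cost_bounds(1) by (simp add: ex_cost_def Suc_le_eq)
    show "top_agent (ex_prefs k) 0 3 ex_cost (insert 1 {4..k + 2}) = {1}"
      by (intro top_agent_ex_one) auto
  qed (auto simp: ex_ballots_def)
  then show "0 < utility M ex_cost (top_agent (ex_prefs k) 0 3 ex_cost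
      (eq_rep k ex_cost 3 (ex_ballots k) \<union> ?Pc'))
      (F_star M F (ex_prefs k) ?Pc' ex_cost 3 (replicate (length (ex_ballots k)) {1}) 0)"
    unfolding top using utility_singleton_pos ex_cost_bounds(1) by (simp add: Suc_le_eq)
qed (rule F(1))

definition ex_awareness :: "nat \<Rightarrow> nat set list" where
  "ex_awareness k = (ex_ballots k)[0 := {0, 1, 2}]"

lemma ex_awareness_valid:
  assumes "1 \<le> k" "j < length (ex_ballots k)"
  shows "ex_awareness k ! j \<subseteq> {0..k + 2}" "ex_ballots k ! j \<subseteq> ex_awareness k ! j"
proof -
  have "ex_ballots k ! j \<subseteq> {0..k + 2}"
    using assms nth_mem union_ex_ballots by blast
  then show "ex_awareness k ! j \<subseteq> {0..k + 2}" "ex_ballots k ! j \<subseteq> ex_awareness k ! j"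
    using assms by (cases "j = 0"; auto simp: ex_awareness_def ex_ballots_def)+
qed

lemma not_U_FSSP_eq_rep:
  assumes k: "1 \<le> k" and F: "allocation_rule F" "unanimous F"
  shows "\<not> U_FSSP kind M (eq_rep k) F"
proof
  let ?U = "ex_awareness k ! 0 \<union> \<Union>(set (ex_ballots k))"
  have U: "?U = {0..k + 2}"
    using union_ex_ballots[OF k] by (auto simp: ex_awareness_def ex_ballots_def)
  have "shortlisting_instance {0..k + 2} ex_cost 3"
    unfolding shortlisting_instance_def using ex_cost_bounds by auto
  moreover have "\<forall>j<length (ex_ballots k). ex_prefs k j \<subseteq> {0..k + 2} \<times> {0..k + 2} \<and>
      strict_linear_order_on {0..k + 2} (ex_prefs k j)"
    by (simp add: ex_prefs_def strict_linear_order_on_less_on) (auto simp: less_on_def)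
  moreover have "length (ex_awareness k) = length (ex_ballots k)"
    by (simp add: ex_awareness_def)
  moreover have "\<forall>j<length (ex_ballots k).
      ex_awareness k ! j \<subseteq> {0..k + 2} \<and> ex_ballots k ! j \<subseteq> ex_awareness k ! j"
    using ex_awareness_valid[OF k] by blast
  moreover have "0 < length (ex_ballots k)"
    by (simp add: ex_ballots_def)
  moreover assume "U_FSSP kind M (eq_rep k) F"
  ultimately have "\<not> (\<exists>P'. P' \<subseteq> ?U \<and> successful_manip kind M (eq_rep k) F (ex_prefs k) ex_cost 3
      ((ex_ballots k)[0 := top_agent (ex_prefs k) 0 3 ex_cost ?U]) 0 P')"
    unfolding U_FSSP_def by blast
  moreover have "(ex_ballots k)[0 := top_agent (ex_prefs k) 0 3 ex_cost ?U] = ex_ballots k"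
    unfolding U top_agent_ex_all by (simp add: ex_ballots_def)
  moreover have "{1} \<subseteq> ?U"
    unfolding U by simp
  ultimately show False
    using ex_successful_manip[OF k F] by (metis (no_types))
qed

theorem proposition6:
  fixes k :: nat and F :: alloc_rule and M :: pref_model
  assumes "1 \<le> k" and "allocation_rule F" and "unanimous F"
  shows "\<not> U_FSSP Pessimistic M (eq_rep k) F \<and> \<not> U_FSSP Optimistic M (eq_rep k) F"
  using not_U_FSSP_eq_rep[OF assms] by blast

end
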